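(* Let $(Z_i)_{i\in\mathbb N}$ be independent with $Z_i\sim N(\mu r_i,1)$, where $\mu>0$ and $r_i\in\{0,1\}$ are fixed, and let $p_i=1-\Phi(Z_i)$. Let $\alpha,\beta\in(0,1)$ and a threshold $c$ be fixed. Consider the online adaptively ordered martingale test with threshold $c$: hypothesis $t$ is included in the set $M$ iff $|Z_t|>c$ (equivalently $\Phi^{-1}(1-g(p_t))>c$), and the test rejects iff at some time the current set $M$ with $K=|M|\ge1$ satisfies $\sum_{i\in M}h(p_i)>C_K^\alpha K^{1/2}$. This test has power at least $1-\beta$ if there exists $k\in\mathbb N$ such that $$(2S(\mu;c)-1)\left(N_1(k)-\frac{C_k^{\beta/3}\sqrt{N_1(k)}}{2\mathbb P(|Z(\mu)|>c)}\right)\ \ge\ \frac{C_k^\alpha+C_k^{\beta/3}}{\mathbb P^{1/2}(|Z(\mu)|>c)}\left[N_1(k)+D^{-1}(c)N_0(k)+\frac{C_k^{\beta/3}k^{1/2}}{2\mathbb P(|Z(\mu)|>c)}\right]^{1/2}.$$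
   Context: $\Phi$ is the standard Gaussian CDF; $h(p)=2\cdot\mathbf 1\{p<0.5\}-1$, $g(p)=\min\{p,1-p\}$. $Z(\nu)$ denotes a $N(\nu,1)$ random variable. For $\gamma\in(0,1)$, $k\ge1$: $C_k^\gamma=1.7\sqrt{\log\log(2k)+0.72\log\frac{5.2}{\gamma}}$. $D(c)=\frac{\mathbb P(|Z(\mu)|>c)}{\mathbb P(|Z(0)|>c)}$, $S(\mu;c)=\mathbb P(Z(\mu)>0\mid |Z(\mu)|>c)$, $N_1(k)=\sum_{i=1}^kr_i$, $N_0(k)=\sum_{i=1}^k(1-r_i)$. Power is the probability of rejection. *)

theory Defs
  imports "HOL-Probability.Probability"
begin

definition Nlaw :: "real \<Rightarrow> real measure" where
  "Nlaw m = density lborel (normal_density m 1)"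

definition Phi :: "real \<Rightarrow> real" where
  "Phi x = measure (Nlaw 0) {..x}"

definition hfun :: "real \<Rightarrow> real" where
  "hfun p = 2 * (if p < 1/2 then 1 else 0) - 1"

definition gfun :: "real \<Rightarrow> real" where
  "gfun p = min p (1 - p)"

definition Ccrit :: "nat \<Rightarrow> real \<Rightarrow> real" where
  "Ccrit k \<gamma> = 1.7 * sqrt (ln (ln (2 * real k)) + 0.72 * ln (5.2 / \<gamma>))"

definition Pabs :: "real \<Rightarrow> real \<Rightarrow> real" where
  "Pabs \<mu> c = measure (Nlaw \<mu>) {x. \<bar>x\<bar> > c}"

definition Dfun :: "real \<Rightarrow> real \<Rightarrow> real" where
  "Dfun \<mu> c = Pabs \<mu> c / Pabs 0 c"

definition Sfun :: "real \<Rightarrow> real \<Rightarrow> real" where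
  "Sfun \<mu> c = measure (Nlaw \<mu>) {x. x > 0 \<and> \<bar>x\<bar> > c} / Pabs \<mu> c"

definition N1 :: "(nat \<Rightarrow> nat) \<Rightarrow> nat \<Rightarrow> real" where
  "N1 r k = (\<Sum>i=1..k. real (r i))"

definition N0 :: "(nat \<Rightarrow> nat) \<Rightarrow> nat \<Rightarrow> real" where
  "N0 r k = (\<Sum>i=1..k. 1 - real (r i))"

definition selected :: "(nat \<Rightarrow> real) \<Rightarrow> real \<Rightarrow> nat \<Rightarrow> nat set" where
  "selected z c t = {i \<in> {1..t}. \<bar>z i\<bar> > c}"

definition rejects :: "real \<Rightarrow> real \<Rightarrow> (nat \<Rightarrow> real) \<Rightarrow> bool" where
  "rejects \<alpha> c z \<longleftrightarrow> (\<exists>t. let Mt = selected z c t; K = card Mt in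
      K \<ge> 1 \<and> (\<Sum>i\<in>Mt. hfun (1 - Phi (z i))) > Ccrit K \<alpha> * sqrt (real K))"

end

theory Submission
  imports Defs
begin

(* Fix k as in the hypothesis and let C = C_k^(beta/3).  Call a sample typical if
   (i) the number of selected non-nulls among the first k hypotheses exceeds its mean minus C sqrt(N1)/2,
   (ii) the number K of hypotheses selected up to time k is below its mean plus C sqrt(k)/2, and
   (iii) the signs h(p_i) of the selected hypotheses sum to more than their conditional means
   minus C sqrt(K).
   On a typical sample the hypothesis on k forces rejection at time k.  By Hoeffding's inequality,
   (i) and (ii) each fail with probability at most exp(-C^2/2) <= beta/3.  For (iii), mix over all
   candidate selected sets s the products of exponentially tilted signs with tilt C / sqrt|s|: the
   mixture has expectation at most 1 and exceeds exp(C^2/2) when (iii) fails, so by Markov's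
   inequality (iii) also fails with probability at most beta/3. *)

section \<open>Gaussian laws\<close>

interpretation Nlaw: prob_space "Nlaw m" for m
  unfolding Nlaw_def by (rule prob_space_normal_density) simp

lemma sets_Nlaw [simp, measurable_cong]: "sets (Nlaw m) = sets borel"
  by (simp add: Nlaw_def)

lemma space_Nlaw [simp]: "space (Nlaw m) = UNIV"
  by (simp add: Nlaw_def)

lemma emeasure_Nlaw:
  "A \<in> sets borel \<Longrightarrow> emeasure (Nlaw m) A = (\<integral>\<^sup>+x. ennreal (normal_density m 1 x) * indicator A x \<partial>lborel)"
  unfolding Nlaw_def by (subst emeasure_density) auto

lemma measure_Nlaw_pos:
  assumes A: "A \<in> sets borel" and pos: "0 < emeasure lborel A"
  shows "0 < measure (Nlaw m) A"
proof -
  have "emeasure (Nlaw m) A \<noteq> 0"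
  proof
    assume "emeasure (Nlaw m) A = 0"
    then have "AE x in lborel. ennreal (normal_density m 1 x) * indicator A x = 0"
      using A by (simp add: emeasure_Nlaw nn_integral_0_iff_AE)
    then have "AE x in lborel. x \<notin> A"
    proof (rule eventually_mono)
      fix x
      show "ennreal (normal_density m 1 x) * indicator A x = 0 \<Longrightarrow> x \<notin> A"
        using normal_density_pos[of 1 m x] by (auto split: split_indicator)
    qed
    with A pos show False
      by (simp add: AE_iff_measurable[OF _ refl])
  qed
  then show ?thesis
    by (simp add: Nlaw.emeasure_eq_measure less_le)
qed

lemma measure_Nlaw_singleton [simp]: "measure (Nlaw m) {x} = 0"
  by (simp add: measure_def emeasure_Nlaw nn_integral_0_iff_AE AE_lborel_singleton)

lemma measure_Nlaw_reflect:
  assumes A: "A \<in> sets borel"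
  shows "measure (Nlaw m) (uminus -` A) = measure (Nlaw (-m)) A"
proof -
  have density_reflect: "normal_density (-m) 1 (-x) = normal_density m 1 x" for x
    by (simp add: normal_density_def power2_eq_square algebra_simps)
  have "uminus -` A \<in> sets borel"
    using measurable_sets[OF borel_measurable_uminus[OF measurable_ident_sets[OF refl]] A] by simp
  then have "emeasure (Nlaw m) (uminus -` A)
      = (\<integral>\<^sup>+x. (\<lambda>y. ennreal (normal_density (-m) 1 y) * indicator A y) (-x) \<partial>lborel)"
    by (simp add: emeasure_Nlaw density_reflect indicator_def)
  also have "\<dots> = (\<integral>\<^sup>+y. ennreal (normal_density (-m) 1 y) * indicator A y \<partial>distr lborel borel uminus)"
    using A by (subst nn_integral_distr) auto
  also have "\<dots> = emeasure (Nlaw (-m)) A"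
    using A by (simp add: lborel_distr_uminus emeasure_Nlaw)
  finally show ?thesis
    by (simp add: measure_def)
qed

lemma measure_Nlaw_neg_mean_le:
  assumes m: "0 \<le> m" and A: "A \<in> sets borel" "A \<subseteq> {0..}"
  shows "measure (Nlaw (-m)) A \<le> measure (Nlaw m) A"
proof -
  have "normal_density (-m) 1 x \<le> normal_density m 1 x" if "x \<in> A" for x
  proof -
    have "(x - m)\<^sup>2 \<le> (x + m)\<^sup>2"
      using that A m by (auto simp: power2_eq_square algebra_simps)
    then show ?thesis
      by (simp add: normal_density_def divide_right_mono)
  qed
  then have "emeasure (Nlaw (-m)) A \<le> emeasure (Nlaw m) A"
    unfolding emeasure_Nlaw[OF A(1)]
    by (intro nn_integral_mono) (auto simp: indicator_def)
  then show ?thesis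
    by (simp add: Nlaw.emeasure_eq_measure)
qed

lemma distr_eq_Nlaw:
  assumes "distributed M lborel X (normal_density m 1)"
  shows "distr M borel X = Nlaw m"
proof -
  have "distr M borel X = distr M lborel X"
    by (rule distr_cong) auto
  also have "\<dots> = Nlaw m"
    using distributed_distr_eq_density[OF assms] by (simp add: Nlaw_def)
  finally show ?thesis .
qed

definition pos_sign :: "real \<Rightarrow> real" where
  "pos_sign z = (if 0 < z then 1 else -1)"

lemma pos_sign_measurable [measurable]: "pos_sign \<in> borel_measurable borel"
  unfolding pos_sign_def by measurable

lemma Phi_0: "Phi 0 = 1/2"
proof -
  have "measure (Nlaw 0) {..0} = measure (Nlaw 0) {0..}"
    using measure_Nlaw_reflect[of "{0..}" 0] by (simp add: vimage_def atMost_def)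
  also have "{0::real..} = {0} \<union> {0<..}"
    by auto
  also have "measure (Nlaw 0) \<dots> = measure (Nlaw 0) {0<..}"
    using Nlaw.finite_measure_Union[where m=0 and A="{0}" and B="{0<..}"] by (simp add: ivl_disj_un)
  also have "\<dots> = 1 - measure (Nlaw 0) {..0}"
    using Nlaw.prob_compl[where m=0 and A="{..0}"] by (simp add: Compl_eq_Diff_UNIV[symmetric] Compl_atMost)
  finally show ?thesis
    by (simp add: Phi_def)
qed

lemma hfun_one_minus_Phi: "hfun (1 - Phi z) = pos_sign z"
proof (cases "0 < z")
  case True
  then have "{..z} = {..0} \<union> {0<..z}"
    by auto
  then have "Phi z = Phi 0 + measure (Nlaw 0) {0<..z}"
    unfolding Phi_def using Nlaw.finite_measure_Union[where m=0 and A="{..0}" and B="{0<..z}"]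
    by (auto simp: disjoint_iff)
  moreover have "0 < measure (Nlaw 0) {0<..z}"
    using True by (intro measure_Nlaw_pos) auto
  ultimately show ?thesis
    using True by (simp add: Phi_0 hfun_def pos_sign_def)
next
  case False
  then have "Phi z \<le> Phi 0"
    unfolding Phi_def by (intro Nlaw.finite_measure_mono) auto
  then show ?thesis
    using False by (simp add: Phi_0 hfun_def pos_sign_def)
qed

lemma Pabs_pos: "0 < Pabs m c"
proof -
  have "0 < measure (Nlaw m) {\<bar>c\<bar><..\<bar>c\<bar>+1}"
    by (intro measure_Nlaw_pos) auto
  also have "\<dots> \<le> Pabs m c"
    unfolding Pabs_def by (intro Nlaw.finite_measure_mono) auto
  finally show ?thesis .
qed

lemma Sfun_ge_half:
  assumes "0 \<le> m"
  shows "1/2 \<le> Sfun m c"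
proof -
  define pos where "pos = {x::real. 0 < x \<and> c < \<bar>x\<bar>}"
  define neg where "neg = {x::real. x \<le> 0 \<and> c < \<bar>x\<bar>}"
  have "measure (Nlaw m) neg = measure (Nlaw (-m)) {x. 0 \<le> x \<and> c < \<bar>x\<bar>}"
    using measure_Nlaw_reflect[of "{x. 0 \<le> x \<and> c < \<bar>x\<bar>}" m]
    by (simp add: neg_def vimage_def)
  also have "\<dots> \<le> measure (Nlaw m) {x. 0 \<le> x \<and> c < \<bar>x\<bar>}"
    using assms by (intro measure_Nlaw_neg_mean_le) auto
  also have "\<dots> \<le> measure (Nlaw m) (pos \<union> {0})"
    by (intro Nlaw.finite_measure_mono) (auto simp: pos_def)
  also have "\<dots> \<le> measure (Nlaw m) pos + measure (Nlaw m) {0}"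
    by (intro measure_Un_le) (auto simp: pos_def)
  finally have "measure (Nlaw m) neg \<le> measure (Nlaw m) pos"
    by simp
  moreover have "Pabs m c = measure (Nlaw m) pos + measure (Nlaw m) neg"
    unfolding Pabs_def pos_def neg_def
    by (subst Nlaw.finite_measure_Union[symmetric]) (auto intro: arg_cong2[where f=measure])
  ultimately show ?thesis
    using Pabs_pos[of m c] by (simp add: Sfun_def pos_def field_simps)
qed

section \<open>Critical values\<close>

lemma ln_ln_two_mult_ge:
  assumes "1 \<le> k"
  shows "- 1/2 \<le> ln (ln (2 * real k))"
proof -
  have "ln (3/2::real) \<le> ln (exp (1/2))"
    using exp_ge_add_one_self[of "1/2::real"] by (subst ln_le_cancel_iff) auto
  then have "- 1/2 \<le> ln (2/3::real)"
    by (simp add: ln_div)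
  also have "2/3 \<le> ln (2 * real k)"
    using ln2_ge_two_thirds assms by (smt (verit) ln_le_cancel_iff of_nat_1 of_nat_mono)
  then have "ln (2/3) \<le> ln (ln (2 * real k))"
    by simp
  finally show ?thesis .
qed

lemma Ccrit_radicand_pos:
  assumes "1 \<le> k" "0 < \<gamma>" "\<gamma> < 1"
  shows "0 < ln (ln (2 * real k)) + 0.72 * ln (5.2 / \<gamma>)"
proof -
  have "1 \<le> ln (5.2::real)"
    using exp_le by (subst ln_ge_iff) auto
  also have "\<dots> \<le> ln (5.2 / \<gamma>)"
    using assms by (simp add: field_simps)
  finally show ?thesis
    using ln_ln_two_mult_ge[OF assms(1)] by simp
qed

lemma Ccrit_pos: "1 \<le> k \<Longrightarrow> 0 < \<gamma> \<Longrightarrow> \<gamma> < 1 \<Longrightarrow> 0 < Ccrit k \<gamma>"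
  using Ccrit_radicand_pos by (simp add: Ccrit_def)

lemma Ccrit_mono: "1 \<le> K \<Longrightarrow> K \<le> k \<Longrightarrow> Ccrit K \<gamma> \<le> Ccrit k \<gamma>"
  by (simp add: Ccrit_def)

text \<open>This works because \<open>1.7\<^sup>2 \<cdot> 0.72 / 2 \<ge> 1\<close>.\<close>
lemma exp_neg_Ccrit_le:
  assumes "1 \<le> k" "0 < \<gamma>" "\<gamma> < 1"
  shows "exp (- (Ccrit k \<gamma>)\<^sup>2 / 2) \<le> \<gamma>"
proof -
  define X where "X = ln (ln (2 * real k)) + 0.72 * ln (5.2 / \<gamma>)"
  have "0 < X"
    using Ccrit_radicand_pos[OF assms] by (simp add: X_def)
  then have "(Ccrit k \<gamma>)\<^sup>2 = 2.89 * X"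
    unfolding Ccrit_def X_def[symmetric] by (simp add: power_mult_distrib power_divide)
  moreover have "X = ln (ln (2 * real k)) + 0.72 * (ln 5.2 - ln \<gamma>)"
    using assms by (simp only: X_def ln_div) simp
  moreover have "1 \<le> ln (5.2::real)"
    using exp_le by (subst ln_ge_iff) auto
  moreover have "ln \<gamma> \<le> 0"
    using assms by simp
  ultimately have "- (Ccrit k \<gamma>)\<^sup>2 / 2 \<le> ln \<gamma>"
    using ln_ln_two_mult_ge[OF assms(1)] by simp argo
  then show ?thesis
    using assms by (simp add: ln_ge_iff)
qed

section \<open>Exponential tilting of the selected signs\<close>

text \<open>Hoeffding's lemma for a sign \<open>X\<close> with \<open>P(X = 1) = q\<close>, centred at its mean \<open>2 q - 1\<close>.\<close>
lemma exp_moment_two_point_le: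
  fixes q l :: real
  assumes q: "0 \<le> q" "q \<le> 1" and l: "0 \<le> l"
  shows "q * exp (- 2 * l * (1 - q)) + (1 - q) * exp (2 * l * q) \<le> exp (l\<^sup>2 / 2)"
proof -
  define p where "p = 1 - q"
  have mgf_pos: "0 < 1 + p * (exp (2 * l) - 1)"
    using q l by (intro add_pos_nonneg) (auto simp: p_def)
  have hoeffding: "- (2 * l) * p + ln (1 + p * (exp (2 * l) - 1)) \<le> (2 * l)\<^sup>2 / 8"
    using q l by (intro Hoeffdings_lemma_aux) (auto simp: p_def)
  have "exp (2 * l * q) = exp (- 2 * l * (1 - q)) * exp (2 * l)"
    by (simp add: algebra_simps flip: exp_add)
  then have "q * exp (- 2 * l * (1 - q)) + (1 - q) * exp (2 * l * q)
      = exp (- (2 * l) * p) * (1 + p * (exp (2 * l) - 1))"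
    by (simp add: p_def algebra_simps)
  also have "\<dots> = exp (- (2 * l) * p + ln (1 + p * (exp (2 * l) - 1)))"
    using mgf_pos by (simp add: exp_diff exp_minus field_simps)
  also have "\<dots> \<le> exp ((2 * l)\<^sup>2 / 8)"
    using hoeffding by simp
  also have "(2 * l)\<^sup>2 / 8 = l\<^sup>2 / 2"
    by (simp add: power_mult_distrib)
  finally show ?thesis .
qed

text \<open>For \<open>Z\<close> with law \<open>N\<close> this is the conditional mean of the sign of \<open>Z\<close> given \<open>|Z| > c\<close>,
  i.e. \<open>2 S - 1\<close> in the notation of the paper (with junk value \<open>-1\<close> if \<open>P(|Z| > c) = 0\<close>).\<close>
definition sign_bias :: "real measure \<Rightarrow> real \<Rightarrow> real" where
  "sign_bias N c = 2 * (measure N {x. 0 < x \<and> c < \<bar>x\<bar>} / measure N {x. c < \<bar>x\<bar>}) - 1"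

lemma sign_bias_Nlaw: "sign_bias (Nlaw m) c = 2 * Sfun m c - 1"
  by (simp add: sign_bias_def Sfun_def Pabs_def)

definition sign_tilt :: "real \<Rightarrow> real \<Rightarrow> real \<Rightarrow> real \<Rightarrow> real" where
  "sign_tilt c l b z = (if c < \<bar>z\<bar> then exp (- l * (pos_sign z - b) - l\<^sup>2 / 2) else 0)"

lemma sign_tilt_nonneg: "0 \<le> sign_tilt c l b z"
  by (simp add: sign_tilt_def)

lemma sign_tilt_measurable [measurable]: "sign_tilt c l b \<in> borel_measurable borel"
  unfolding sign_tilt_def by measurable

lemma sign_tilt_le:
  assumes "0 \<le> l"
  shows "sign_tilt c l b z \<le> exp (l * (1 + \<bar>b\<bar>))"
proof -
  have "- l * (pos_sign z - b) \<le> l * (1 + \<bar>b\<bar>)"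
    using mult_left_mono[of "b - pos_sign z" "1 + \<bar>b\<bar>" l] assms
    by (auto simp: pos_sign_def algebra_simps)
  then have "- l * (pos_sign z - b) - l\<^sup>2 / 2 \<le> l * (1 + \<bar>b\<bar>)"
    using zero_le_power2[of l] by linarith
  then show ?thesis
    unfolding sign_tilt_def by auto
qed

lemma integral_sign_tilt_le:
  assumes "prob_space N" and sets_N: "sets N = sets borel" and l: "0 \<le> l"
  shows "(\<integral>z. sign_tilt c l (sign_bias N c) z \<partial>N) \<le> measure N {x. c < \<bar>x\<bar>}"
proof -
  interpret N: prob_space N by fact
  define A where "A = {x::real. 0 < x \<and> c < \<bar>x\<bar>}"
  define B where "B = {x::real. x \<le> 0 \<and> c < \<bar>x\<bar>}"
  define p where "p = measure N {x. c < \<bar>x\<bar>}"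
  define q where "q = measure N A / p"
  have [measurable]: "A \<in> sets N" "B \<in> sets N"
    unfolding A_def B_def sets_N by measurable
  have "{x. c < \<bar>x\<bar>} = A \<union> B" "A \<inter> B = {}"
    by (auto simp: A_def B_def)
  then have p: "p = measure N A + measure N B"
    unfolding p_def by (simp add: N.finite_measure_Union)
  have bias: "sign_bias N c = 2 * q - 1"
    by (simp add: sign_bias_def q_def p_def A_def)
  define e1 where "e1 = exp (- l\<^sup>2 / 2) * exp (- 2 * l * (1 - q))"
  define e2 where "e2 = exp (- l\<^sup>2 / 2) * exp (2 * l * q)"
  have "sign_tilt c l (sign_bias N c) = (\<lambda>z. e1 * indicator A z + e2 * indicator B z)"
    by (auto simp: fun_eq_iff sign_tilt_def bias e1_def e2_def pos_sign_def A_def B_def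
        exp_add[symmetric] algebra_simps split: split_indicator)
  then have "(\<integral>z. sign_tilt c l (sign_bias N c) z \<partial>N) = e1 * measure N A + e2 * measure N B"
    by (simp add: N.emeasure_eq_measure)
  also have "\<dots> \<le> p"
  proof (cases "p = 0")
    case True
    then show ?thesis
      using p by (simp add: measure_nonneg add_nonneg_eq_0_iff)
  next
    case False
    then have "0 < p"
      using p by (simp add: less_le)
    then have A: "measure N A = q * p" and "0 \<le> q" "q \<le> 1"
      using p by (auto simp: q_def field_simps)
    then have B: "measure N B = (1 - q) * p"
      using p by (simp add: algebra_simps)
    then have "e1 * measure N A + e2 * measure N B
        = p * exp (- l\<^sup>2 / 2) * (q * exp (- 2 * l * (1 - q)) + (1 - q) * exp (2 * l * q))"
      unfolding A B e1_def e2_def by (simp add: algebra_simps)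
    also have "\<dots> \<le> p * exp (- l\<^sup>2 / 2) * exp (l\<^sup>2 / 2)"
      using exp_moment_two_point_le[OF \<open>0 \<le> q\<close> \<open>q \<le> 1\<close> l] \<open>0 < p\<close> by simp
    also have "\<dots> = p"
      by (simp add: exp_minus)
    finally show ?thesis .
  qed
  finally show ?thesis
    by (simp add: p_def)
qed

definition sign_factor :: "real \<Rightarrow> real \<Rightarrow> 'i set \<Rightarrow> real \<Rightarrow> 'i \<Rightarrow> real \<Rightarrow> real" where
  "sign_factor c C s b i z =
    (if i \<in> s then sign_tilt c (C / sqrt (card s)) b z else of_bool (\<bar>z\<bar> \<le> c))"

lemma sign_factor_nonneg: "0 \<le> sign_factor c C s b i z"
  by (simp add: sign_factor_def sign_tilt_nonneg)

lemma sign_factor_measurable [measurable]: "sign_factor c C s b i \<in> borel_measurable borel"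
  unfolding sign_factor_def by measurable

lemma integral_sign_factor_le:
  assumes N: "prob_space N" "sets N = sets borel" and C: "0 \<le> C"
  shows "(\<integral>z. sign_factor c C s (sign_bias N c) i z \<partial>N)
    \<le> (if i \<in> s then measure N {x. c < \<bar>x\<bar>} else 1 - measure N {x. c < \<bar>x\<bar>})"
proof (cases "i \<in> s")
  case True
  then show ?thesis
    using integral_sign_tilt_le[OF N, of "C / sqrt (card s)" c] C by (simp add: sign_factor_def)
next
  case False
  interpret N: prob_space N by fact
  have "(\<integral>z. sign_factor c C s (sign_bias N c) i z \<partial>N) = (\<integral>z. indicator (UNIV - {x. c < \<bar>x\<bar>}) z \<partial>N)"
    using False by (intro Bochner_Integration.integral_cong) (auto simp: sign_factor_def)
  also have "\<dots> = 1 - measure N {x. c < \<bar>x\<bar>}"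
    using N.prob_compl[of "{x. c < \<bar>x\<bar>}"] N(2) by (simp add: N.emeasure_eq_measure sets_eq_imp_space_eq)
  finally show ?thesis
    using False by simp
qed

text \<open>On a given sample only the term with \<open>s\<close> equal to the selected set is nonzero.\<close>
definition sign_mixture :: "real \<Rightarrow> real \<Rightarrow> 'i set \<Rightarrow> ('i \<Rightarrow> real) \<Rightarrow> ('i \<Rightarrow> real) \<Rightarrow> real" where
  "sign_mixture c C I b z = (\<Sum>s\<in>Pow I. \<Prod>i\<in>I. sign_factor c C s (b i) i (z i))"

lemma sign_mixture_nonneg: "0 \<le> sign_mixture c C I b z"
  unfolding sign_mixture_def by (intro sum_nonneg prod_nonneg) (simp add: sign_factor_nonneg)

lemma exp_le_sign_mixture:
  fixes I :: "'i set" and z b :: "'i \<Rightarrow> real" and c C :: real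
  defines "s \<equiv> {i\<in>I. c < \<bar>z i\<bar>}"
  assumes I: "finite I" and C: "0 \<le> C" and s: "s \<noteq> {}"
    and deviation: "(\<Sum>i\<in>s. pos_sign (z i) - b i) \<le> - C * sqrt (card s)"
  shows "exp (C\<^sup>2 / 2) \<le> sign_mixture c C I b z"
proof -
  define l where "l = C / sqrt (card s)"
  have "finite s" "s \<subseteq> I"
    using I by (auto simp: s_def)
  then have card: "0 < card s"
    using s by (simp add: card_gt_0_iff)
  have "exp (C\<^sup>2 / 2) \<le> exp (- l * (\<Sum>i\<in>s. pos_sign (z i) - b i) - card s * l\<^sup>2 / 2)"
  proof -
    have "l * (C * sqrt (card s)) \<le> - l * (\<Sum>i\<in>s. pos_sign (z i) - b i)"
      using mult_left_mono[OF deviation, of l] C by (simp add: l_def)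
    moreover have "l * (C * sqrt (card s)) = C\<^sup>2" "card s * l\<^sup>2 = C\<^sup>2"
      using card by (simp_all add: l_def power2_eq_square)
    ultimately show ?thesis
      by (intro exp_mono) linarith
  qed
  also have "- l * (\<Sum>i\<in>s. pos_sign (z i) - b i) - card s * l\<^sup>2 / 2
      = (\<Sum>i\<in>s. - l * (pos_sign (z i) - b i) - l\<^sup>2 / 2)"
    by (simp add: sum_subtractf sum_distrib_left[symmetric] sum_negf)
  also have "exp \<dots> = (\<Prod>i\<in>s. sign_tilt c l (b i) (z i))"
    using \<open>finite s\<close> by (simp add: exp_sum sign_tilt_def s_def)
  also have "\<dots> = (\<Prod>i\<in>I. sign_factor c C s (b i) i (z i))"
    using I \<open>s \<subseteq> I\<close> by (intro prod.mono_neutral_cong_right[symmetric]) (auto simp: s_def sign_factor_def l_def)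
  also have "\<dots> \<le> sign_mixture c C I b z"
    unfolding sign_mixture_def using I \<open>s \<subseteq> I\<close>
    by (intro member_le_sum prod_nonneg) (auto simp: sign_factor_nonneg)
  finally show ?thesis .
qed

lemma (in prob_space) expectation_sign_mixture_le:
  fixes Z :: "'i \<Rightarrow> 'a \<Rightarrow> real" and b :: "'i \<Rightarrow> real"
  assumes I: "finite I" and indep: "indep_vars (\<lambda>_. borel) Z I" and C: "0 \<le> C"
    and b: "\<And>i. i \<in> I \<Longrightarrow> b i = sign_bias (distr M borel (Z i)) c"
  shows "integrable M (\<lambda>\<omega>. sign_mixture c C I b (\<lambda>i. Z i \<omega>))"
    and "expectation (\<lambda>\<omega>. sign_mixture c C I b (\<lambda>i. Z i \<omega>)) \<le> 1"
proof -
  define p where "p i = measure (distr M borel (Z i)) {x. c < \<bar>x\<bar>}" for i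
  define F where "F s i = (\<lambda>\<omega>. sign_factor c C s (b i) i (Z i \<omega>))" for s i
  have rv [measurable]: "random_variable borel (Z i)" if "i \<in> I" for i
    using indep that by (auto simp: indep_vars_def)
  have F_integrable: "integrable M (F s i)" if "i \<in> I" for s i
  proof (rule integrable_const_bound[where B = "exp (C / sqrt (card s) * (1 + \<bar>b i\<bar>)) + 1"])
    have "sign_factor c C s (b i) i z \<le> exp (C / sqrt (card s) * (1 + \<bar>b i\<bar>)) + 1" for z
      using sign_tilt_le[of "C / sqrt (card s)" c "b i" z] C
      by (auto simp: sign_factor_def intro: add_increasing2)
    then show "AE \<omega> in M. norm (F s i \<omega>) \<le> exp (C / sqrt (card s) * (1 + \<bar>b i\<bar>)) + 1"
      by (simp add: F_def sign_factor_nonneg)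
    show "F s i \<in> borel_measurable M"
      unfolding F_def by (rule measurable_compose[OF rv[OF that] sign_factor_measurable])
  qed
  have F_indep: "indep_vars (\<lambda>_. borel) (F s) I" for s
    unfolding F_def by (rule indep_vars_compose2[OF indep]) simp
  have expectation_F: "expectation (F s i) \<le> (if i \<in> s then p i else 1 - p i)" if "i \<in> I" for s i
    using that integral_sign_factor_le[OF prob_space_distr, of "Z i" borel C c s i] C
    by (simp add: F_def p_def b integral_distr split: if_splits)
  have mixture_eq: "sign_mixture c C I b (\<lambda>i. Z i \<omega>) = (\<Sum>s\<in>Pow I. \<Prod>i\<in>I. F s i \<omega>)" for \<omega>
    by (simp add: sign_mixture_def F_def)
  have product_integrable: "integrable M (\<lambda>\<omega>. \<Prod>i\<in>I. F s i \<omega>)" for s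
    using indep_vars_integrable[OF I F_indep F_integrable] .
  then show "integrable M (\<lambda>\<omega>. sign_mixture c C I b (\<lambda>i. Z i \<omega>))"
    unfolding mixture_eq by auto
  have "expectation (\<lambda>\<omega>. sign_mixture c C I b (\<lambda>i. Z i \<omega>)) = (\<Sum>s\<in>Pow I. \<Prod>i\<in>I. expectation (F s i))"
    unfolding mixture_eq using product_integrable
    by (simp add: Bochner_Integration.integral_sum indep_vars_lebesgue_integral[OF I F_indep F_integrable])
  also have "\<dots> \<le> (\<Sum>s\<in>Pow I. \<Prod>i\<in>I. if i \<in> s then p i else 1 - p i)"
    using expectation_F by (intro sum_mono prod_mono) (auto simp: F_def sign_factor_nonneg)
  also have "\<dots> = (\<Sum>s\<in>Pow I. (\<Prod>i\<in>s. p i) * (\<Prod>i\<in>I - s. 1 - p i))"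
    using I by (intro sum.cong refl) (auto simp: prod.If_cases Int_absorb1 Diff_eq)
  also have "\<dots> = (\<Prod>i\<in>I. p i + (1 - p i))"
    by (rule prod_add[OF I, symmetric])
  finally show "expectation (\<lambda>\<omega>. sign_mixture c C I b (\<lambda>i. Z i \<omega>)) \<le> 1"
    by simp
qed

lemma (in prob_space) prob_sign_deviation_le:
  fixes Z :: "'i \<Rightarrow> 'a \<Rightarrow> real" and b :: "'i \<Rightarrow> real"
  assumes I: "finite I" and indep: "indep_vars (\<lambda>_. borel) Z I" and C: "0 \<le> C"
    and b: "\<And>i. i \<in> I \<Longrightarrow> b i = sign_bias (distr M borel (Z i)) c"
  shows "prob {\<omega>\<in>space M. {i\<in>I. c < \<bar>Z i \<omega>\<bar>} \<noteq> {} \<and>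
      (\<Sum>i\<in>{i\<in>I. c < \<bar>Z i \<omega>\<bar>}. pos_sign (Z i \<omega>) - b i) \<le> - C * sqrt (card {i\<in>I. c < \<bar>Z i \<omega>\<bar>})}
    \<le> exp (- C\<^sup>2 / 2)"
proof -
  define Y where "Y = (\<lambda>\<omega>. sign_mixture c C I b (\<lambda>i. Z i \<omega>))"
  have Y: "integrable M Y" "expectation Y \<le> 1"
    using expectation_sign_mixture_le[OF I indep C b] by (simp_all add: Y_def)
  have "prob {\<omega>\<in>space M. {i\<in>I. c < \<bar>Z i \<omega>\<bar>} \<noteq> {} \<and>
      (\<Sum>i\<in>{i\<in>I. c < \<bar>Z i \<omega>\<bar>}. pos_sign (Z i \<omega>) - b i) \<le> - C * sqrt (card {i\<in>I. c < \<bar>Z i \<omega>\<bar>})}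
    \<le> prob {\<omega>\<in>space M. exp (C\<^sup>2 / 2) \<le> Y \<omega>}" (is "prob ?A \<le> prob ?B")
  proof (rule finite_measure_mono[OF subsetI])
    fix \<omega>
    assume "\<omega> \<in> ?A"
    then show "\<omega> \<in> ?B"
      using exp_le_sign_mixture[OF I C, of c "\<lambda>i. Z i \<omega>" b] by (simp add: Y_def)
  next
    show "?B \<in> events"
      using borel_measurable_integrable[OF Y(1)] by measurable
  qed
  also have "\<dots> \<le> expectation Y / exp (C\<^sup>2 / 2)"
    using Y(1) by (intro integral_Markov_inequality_measure[where A="space M"])
      (auto simp: Y_def sign_mixture_nonneg)
  also have "\<dots> \<le> exp (- C\<^sup>2 / 2)"
    using Y(2) by (simp add: exp_minus field_simps)
  finally show ?thesis .
qed

section \<open>Selection counts\<close>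

lemma (in prob_space) prob_selected_count_deviation_le:
  fixes Z :: "'i \<Rightarrow> 'a \<Rightarrow> real" and c C :: real
  defines "p i \<equiv> measure (distr M borel (Z i)) {x. c < \<bar>x\<bar>}"
  assumes J: "finite J" "J \<noteq> {}" and indep: "indep_vars (\<lambda>_. borel) Z J" and C: "0 \<le> C"
  shows "prob {\<omega>\<in>space M. real (card {i\<in>J. c < \<bar>Z i \<omega>\<bar>}) \<le> (\<Sum>i\<in>J. p i) - C * sqrt (card J) / 2}
      \<le> exp (- C\<^sup>2 / 2)"
    and "prob {\<omega>\<in>space M. (\<Sum>i\<in>J. p i) + C * sqrt (card J) / 2 \<le> real (card {i\<in>J. c < \<bar>Z i \<omega>\<bar>})}
      \<le> exp (- C\<^sup>2 / 2)"
proof -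
  define X where "X i \<omega> = (of_bool (c < \<bar>Z i \<omega>\<bar>) :: real)" for i \<omega>
  have rv [measurable]: "random_variable borel (Z i)" if "i \<in> J" for i
    using indep that by (auto simp: indep_vars_def)
  have count: "real (card {i\<in>J. c < \<bar>Z i \<omega>\<bar>}) = (\<Sum>i\<in>J. X i \<omega>)" for \<omega>
    using J by (simp add: X_def sum.If_cases Int_def)
  have "expectation (X i) = p i" if "i \<in> J" for i
  proof -
    have "expectation (X i) = expectation (indicator {\<omega>\<in>space M. c < \<bar>Z i \<omega>\<bar>})"
      by (intro Bochner_Integration.integral_cong) (auto simp: X_def)
    also have "\<dots> = prob {\<omega>\<in>space M. c < \<bar>Z i \<omega>\<bar>}"
      using rv[OF that] by (simp add: emeasure_eq_measure)
    also have "\<dots> = p i"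
      unfolding p_def using rv[OF that]
      by (subst measure_distr) (auto intro!: arg_cong[where f="measure M"])
    finally show ?thesis .
  qed
  then have mean: "(\<Sum>i\<in>J. expectation (X i)) = (\<Sum>i\<in>J. p i)"
    by simp
  interpret Hoeffding_ineq M J X "\<lambda>_. 0" "\<lambda>_. 1" "\<Sum>i\<in>J. expectation (X i)"
  proof unfold_locales
    show "indep_vars (\<lambda>_. borel) X J"
      unfolding X_def by (rule indep_vars_compose2[OF indep]) simp
  qed (auto simp: J X_def)
  have "0 < card J"
    using J by (simp add: card_gt_0_iff)
  then have width: "0 < (\<Sum>i\<in>J. (1 - 0 :: real)\<^sup>2)"
    and exponent: "- 2 * (C * sqrt (card J) / 2)\<^sup>2 / (\<Sum>i\<in>J. (1 - 0 :: real)\<^sup>2) = - C\<^sup>2 / 2"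
    by (simp_all add: power_mult_distrib power_divide)
  have \<epsilon>: "0 \<le> C * sqrt (card J) / 2"
    using C by simp
  show "prob {\<omega>\<in>space M. real (card {i\<in>J. c < \<bar>Z i \<omega>\<bar>}) \<le> (\<Sum>i\<in>J. p i) - C * sqrt (card J) / 2}
      \<le> exp (- C\<^sup>2 / 2)"
    using Hoeffding_ineq_le[OF \<epsilon> width] unfolding exponent by (simp add: count mean)
  show "prob {\<omega>\<in>space M. (\<Sum>i\<in>J. p i) + C * sqrt (card J) / 2 \<le> real (card {i\<in>J. c < \<bar>Z i \<omega>\<bar>})}
      \<le> exp (- C\<^sup>2 / 2)"
    using Hoeffding_ineq_ge[OF \<epsilon> width] unfolding exponent by (simp add: count mean)
qed

lemma sets_Collect_selected:
  fixes Z :: "'i \<Rightarrow> 'a \<Rightarrow> real"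
  assumes I: "finite I" and Z: "\<And>i. i \<in> I \<Longrightarrow> Z i \<in> borel_measurable M"
    and P: "\<And>s. s \<subseteq> I \<Longrightarrow> {\<omega>\<in>space M. P s \<omega>} \<in> sets M"
  shows "{\<omega>\<in>space M. P {i\<in>I. c < \<bar>Z i \<omega>\<bar>} \<omega>} \<in> sets M"
proof -
  have "{\<omega>\<in>space M. P {i\<in>I. c < \<bar>Z i \<omega>\<bar>} \<omega>}
      = (\<Union>s\<in>Pow I. {\<omega>\<in>space M. \<forall>i\<in>I. c < \<bar>Z i \<omega>\<bar> \<longleftrightarrow> i \<in> s} \<inter> {\<omega>\<in>space M. P s \<omega>})"
  proof (intro equalityI subsetI)
    fix \<omega>
    assume "\<omega> \<in> {\<omega>\<in>space M. P {i\<in>I. c < \<bar>Z i \<omega>\<bar>} \<omega>}"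
    then show "\<omega> \<in> (\<Union>s\<in>Pow I. {\<omega>\<in>space M. \<forall>i\<in>I. c < \<bar>Z i \<omega>\<bar> \<longleftrightarrow> i \<in> s} \<inter> {\<omega>\<in>space M. P s \<omega>})"
      by (intro UN_I[of "{i\<in>I. c < \<bar>Z i \<omega>\<bar>}"]) auto
  next
    fix \<omega>
    assume "\<omega> \<in> (\<Union>s\<in>Pow I. {\<omega>\<in>space M. \<forall>i\<in>I. c < \<bar>Z i \<omega>\<bar> \<longleftrightarrow> i \<in> s} \<inter> {\<omega>\<in>space M. P s \<omega>})"
    then obtain s where "s \<subseteq> I" "\<omega> \<in> space M" "\<forall>i\<in>I. c < \<bar>Z i \<omega>\<bar> \<longleftrightarrow> i \<in> s" "P s \<omega>"
      by auto
    moreover from this have "{i\<in>I. c < \<bar>Z i \<omega>\<bar>} = s"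
      by auto
    ultimately show "\<omega> \<in> {\<omega>\<in>space M. P {i\<in>I. c < \<bar>Z i \<omega>\<bar>} \<omega>}"
      by simp
  qed
  also have "\<dots> \<in> sets M"
  proof (intro sets.finite_UN sets.Int P)
    fix s
    have "{\<omega>\<in>space M. c < \<bar>Z i \<omega>\<bar> \<longleftrightarrow> i \<in> s} \<in> sets M" if "i \<in> I" for i
      using Z[OF that] by measurable
    then show "{\<omega>\<in>space M. \<forall>i\<in>I. c < \<bar>Z i \<omega>\<bar> \<longleftrightarrow> i \<in> s} \<in> sets M"
      using I by (intro sets.sets_Collect_finite_All) auto
  qed (use I in auto)
  finally show ?thesis .
qed

lemma sets_Collect_selected_card:
  fixes Z :: "'i \<Rightarrow> 'a \<Rightarrow> real"
  assumes "finite I" "\<And>i. i \<in> I \<Longrightarrow> Z i \<in> borel_measurable M"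
  shows "{\<omega>\<in>space M. P (card {i\<in>I. c < \<bar>Z i \<omega>\<bar>})} \<in> sets M"
  using assms by (intro sets_Collect_selected[where P="\<lambda>s \<omega>. P (card s)"]) auto

lemma sets_Collect_sign_deviation:
  fixes Z :: "'i \<Rightarrow> 'a \<Rightarrow> real"
  assumes I: "finite I" and Z: "\<And>i. i \<in> I \<Longrightarrow> Z i \<in> borel_measurable M"
  shows "{\<omega>\<in>space M. {i\<in>I. c < \<bar>Z i \<omega>\<bar>} \<noteq> {} \<and>
    (\<Sum>i\<in>{i\<in>I. c < \<bar>Z i \<omega>\<bar>}. pos_sign (Z i \<omega>) - b i) \<le> - C * sqrt (card {i\<in>I. c < \<bar>Z i \<omega>\<bar>})}
    \<in> sets M"
proof (intro sets_Collect_selected[where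
      P="\<lambda>s \<omega>. s \<noteq> {} \<and> (\<Sum>i\<in>s. pos_sign (Z i \<omega>) - b i) \<le> - C * sqrt (card s)"])
  fix s
  assume "s \<subseteq> I"
  then have "(\<lambda>\<omega>. \<Sum>i\<in>s. pos_sign (Z i \<omega>) - b i) \<in> borel_measurable M"
    using Z by (intro borel_measurable_sum) auto
  then show "{\<omega>\<in>space M. s \<noteq> {} \<and> (\<Sum>i\<in>s. pos_sign (Z i \<omega>) - b i) \<le> - C * sqrt (card s)} \<in> sets M"
    by measurable
qed (use I Z in auto)

section \<open>Rejection on typical samples\<close>

lemma rejects_iff_pos_sign:
  "rejects \<alpha> c z \<longleftrightarrow> (\<exists>t. 1 \<le> card (selected z c t) \<and>
     Ccrit (card (selected z c t)) \<alpha> * sqrt (card (selected z c t)) < (\<Sum>i\<in>selected z c t. pos_sign (z i)))"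
  unfolding rejects_def Let_def hfun_one_minus_Phi ..

lemma sets_Collect_rejects:
  assumes Z: "\<And>i. 1 \<le> i \<Longrightarrow> Z i \<in> borel_measurable M"
  shows "{\<omega>\<in>space M. rejects \<alpha> c (\<lambda>i. Z i \<omega>)} \<in> sets M"
proof -
  define Q where "Q s \<omega> \<longleftrightarrow> 1 \<le> card s \<and> Ccrit (card s) \<alpha> * sqrt (card s) < (\<Sum>i\<in>s. pos_sign (Z i \<omega>))"
    for s \<omega>
  have Q_sets: "{\<omega>\<in>space M. Q s \<omega>} \<in> sets M" if "s \<subseteq> {1..t}" for s t
  proof -
    have "(\<lambda>\<omega>. \<Sum>i\<in>s. pos_sign (Z i \<omega>)) \<in> borel_measurable M"
      using that Z by (intro borel_measurable_sum measurable_compose[OF _ pos_sign_measurable]) auto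
    then show ?thesis
      unfolding Q_def by measurable
  qed
  have "{\<omega>\<in>space M. Q {i\<in>{1..t}. c < \<bar>Z i \<omega>\<bar>} \<omega>} \<in> sets M" for t
    by (rule sets_Collect_selected[where I="{1..t}" and P=Q]) (auto simp: Z Q_sets)
  then have "{\<omega>\<in>space M. \<exists>t. Q {i\<in>{1..t}. c < \<bar>Z i \<omega>\<bar>} \<omega>} \<in> sets M"
    by (rule sets.sets_Collect_countable_Ex)
  moreover have "rejects \<alpha> c (\<lambda>i. Z i \<omega>) \<longleftrightarrow> (\<exists>t. Q {i\<in>{1..t}. c < \<bar>Z i \<omega>\<bar>} \<omega>)" for \<omega>
    unfolding rejects_iff_pos_sign selected_def Q_def ..
  ultimately show ?thesis
    by simp
qed

lemma rejects_if_drift_dominates: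
  fixes z b :: "nat \<Rightarrow> real" and k :: nat and \<alpha> c C :: real
  defines "s \<equiv> selected z c k"
  assumes drift: "(Ccrit k \<alpha> + C) * sqrt (card s) < (\<Sum>i\<in>s. b i)"
    and deviation: "s \<noteq> {} \<Longrightarrow> - C * sqrt (card s) < (\<Sum>i\<in>s. pos_sign (z i) - b i)"
  shows "rejects \<alpha> c z"
proof -
  have "s \<noteq> {}"
    using drift by auto
  moreover have "s \<subseteq> {1..k}"
    by (auto simp: s_def selected_def)
  ultimately have K: "1 \<le> card s" "card s \<le> k"
    using card_mono[of "{1..k}" s] by (auto simp: Suc_le_eq card_gt_0_iff finite_subset)
  have "Ccrit (card s) \<alpha> * sqrt (card s) \<le> Ccrit k \<alpha> * sqrt (card s)"
    using K by (intro mult_right_mono Ccrit_mono) auto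
  also have "\<dots> < (\<Sum>i\<in>s. pos_sign (z i) - b i) + (\<Sum>i\<in>s. b i)"
    using drift deviation[OF \<open>s \<noteq> {}\<close>] by (simp add: distrib_right)
  also have "\<dots> = (\<Sum>i\<in>s. pos_sign (z i))"
    by (simp add: sum_subtractf)
  finally show ?thesis
    using K(1) unfolding rejects_iff_pos_sign s_def by blast
qed

definition typical :: "real \<Rightarrow> real \<Rightarrow> nat \<Rightarrow> nat set \<Rightarrow> (nat \<Rightarrow> real) \<Rightarrow> (nat \<Rightarrow> real) \<Rightarrow> (nat \<Rightarrow> real) \<Rightarrow> bool"
  where "typical c C k alt p b z \<longleftrightarrow>
    (\<Sum>i\<in>alt. p i) - C * sqrt (card alt) / 2 < card {i\<in>alt. c < \<bar>z i\<bar>} \<and>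
    card (selected z c k) < (\<Sum>i\<in>{1..k}. p i) + C * sqrt k / 2 \<and>
    (selected z c k \<noteq> {} \<longrightarrow>
      - C * sqrt (card (selected z c k)) < (\<Sum>i\<in>selected z c k. pos_sign (z i) - b i))"

lemma rejects_if_typical:
  fixes z b p :: "nat \<Rightarrow> real" and alt :: "nat set" and k :: nat and \<alpha> c C d :: real
  assumes alt: "alt \<subseteq> {1..k}"
    and b: "\<And>i. i \<in> {1..k} \<Longrightarrow> 0 \<le> b i" and d: "0 \<le> d" "\<And>i. i \<in> alt \<Longrightarrow> d \<le> b i"
    and pos: "0 < Ccrit k \<alpha> + C"
    and cond: "(Ccrit k \<alpha> + C) * sqrt ((\<Sum>i\<in>{1..k}. p i) + C * sqrt k / 2)
      \<le> d * ((\<Sum>i\<in>alt. p i) - C * sqrt (card alt) / 2)"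
    and typical: "typical c C k alt p b z"
  shows "rejects \<alpha> c z"
proof (rule rejects_if_drift_dominates)
  define s where "s = selected z c k"
  have "s \<inter> alt = {i\<in>alt. c < \<bar>z i\<bar>}" "s \<subseteq> {1..k}"
    using alt by (auto simp: s_def selected_def)
  have few: "card s < (\<Sum>i\<in>{1..k}. p i) + C * sqrt k / 2"
    and enough: "(\<Sum>i\<in>alt. p i) - C * sqrt (card alt) / 2 < card (s \<inter> alt)"
    using typical \<open>s \<inter> alt = _\<close> by (simp_all add: typical_def s_def)
  have "(Ccrit k \<alpha> + C) * sqrt (card s) < (Ccrit k \<alpha> + C) * sqrt ((\<Sum>i\<in>{1..k}. p i) + C * sqrt k / 2)"
    using pos few by simp
  also have "\<dots> \<le> d * card (s \<inter> alt)"
    using cond mult_left_mono[OF less_imp_le[OF enough] d(1)] by linarith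
  also have "\<dots> = (\<Sum>i\<in>s \<inter> alt. d)"
    by simp
  also have "\<dots> \<le> (\<Sum>i\<in>s \<inter> alt. b i)"
    using d(2) by (intro sum_mono) auto
  also have "\<dots> \<le> (\<Sum>i\<in>s. b i)"
    using \<open>s \<subseteq> {1..k}\<close> b by (intro sum_mono2) (auto intro: finite_subset)
  finally show "(Ccrit k \<alpha> + C) * sqrt (card (selected z c k)) < (\<Sum>i\<in>selected z c k. b i)"
    by (simp add: s_def)
qed (use typical in \<open>simp add: typical_def\<close>)

lemma (in prob_space) prob_typical_ge:
  fixes Z :: "nat \<Rightarrow> 'a \<Rightarrow> real" and alt :: "nat set" and k :: nat and c C \<gamma> :: real
  defines "p i \<equiv> measure (distr M borel (Z i)) {x. c < \<bar>x\<bar>}"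
    and "b i \<equiv> sign_bias (distr M borel (Z i)) c"
  assumes indep: "indep_vars (\<lambda>_. borel) Z {1..k}" and k: "1 \<le> k"
    and alt: "alt \<subseteq> {1..k}" "alt \<noteq> {}" and C: "0 \<le> C" "exp (- C\<^sup>2 / 2) \<le> \<gamma>"
  shows "1 - 3 * \<gamma> \<le> prob {\<omega>\<in>space M. typical c C k alt p b (\<lambda>i. Z i \<omega>)}"
proof -
  define I where "I = {1..k}"
  define sel where "sel J \<omega> = {i\<in>J. c < \<bar>Z i \<omega>\<bar>}" for J \<omega>
  define A1 where "A1 = {\<omega>\<in>space M. card (sel alt \<omega>) \<le> (\<Sum>i\<in>alt. p i) - C * sqrt (card alt) / 2}"
  define A2 where "A2 = {\<omega>\<in>space M. (\<Sum>i\<in>I. p i) + C * sqrt k / 2 \<le> card (sel I \<omega>)}"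
  define A3 where "A3 = {\<omega>\<in>space M. sel I \<omega> \<noteq> {} \<and>
    (\<Sum>i\<in>sel I \<omega>. pos_sign (Z i \<omega>) - b i) \<le> - C * sqrt (card (sel I \<omega>))}"
  have rv: "random_variable borel (Z i)" if "i \<in> I" for i
    using indep that by (auto simp: indep_vars_def I_def)
  have "finite alt"
    using alt finite_subset by blast
  have indep_alt: "indep_vars (\<lambda>_. borel) Z alt"
    using alt by (intro indep_vars_subset[OF indep])
  have typical_eq: "{\<omega>\<in>space M. typical c C k alt p b (\<lambda>i. Z i \<omega>)} = space M - (A1 \<union> A2 \<union> A3)"
    by (auto simp: typical_def A1_def A2_def A3_def sel_def selected_def I_def not_le)
  have prob_A1: "prob A1 \<le> \<gamma>"
    using prob_selected_count_deviation_le(1)[OF \<open>finite alt\<close> alt(2) indep_alt C(1), of c] C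
    by (simp add: A1_def sel_def p_def)
  have prob_A2: "prob A2 \<le> \<gamma>"
    using prob_selected_count_deviation_le(2)[OF _ _ indep C(1), of c] C k
    by (simp add: A2_def sel_def p_def I_def)
  have prob_A3: "prob A3 \<le> \<gamma>"
    using prob_sign_deviation_le[OF _ indep C(1), of b c] C
    by (simp add: A3_def sel_def b_def I_def)
  have A1: "A1 \<in> events"
    unfolding A1_def sel_def using alt rv \<open>finite alt\<close>
    by (intro sets_Collect_selected_card[where P="\<lambda>n. n \<le> (\<Sum>i\<in>alt. p i) - C * sqrt (card alt) / 2"])
      (auto simp: I_def)
  have A2: "A2 \<in> events" and A3: "A3 \<in> events"
    unfolding A2_def A3_def sel_def using rv
    by (intro sets_Collect_selected_card sets_Collect_sign_deviation; simp add: I_def)+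
  have "1 - 3 * \<gamma> \<le> 1 - (prob A1 + prob A2 + prob A3)"
    using prob_A1 prob_A2 prob_A3 by simp
  also have "\<dots> \<le> 1 - prob (A1 \<union> A2 \<union> A3)"
    using A1 A2 A3 by (meson add_right_mono diff_left_mono measure_Un_le order.trans sets.Un)
  also have "\<dots> = prob {\<omega>\<in>space M. typical c C k alt p b (\<lambda>i. Z i \<omega>)}"
    using A1 A2 A3 by (simp add: typical_eq prob_compl)
  finally show ?thesis .
qed

theorem (in prob_space) prob_rejects_ge:
  fixes Z :: "nat \<Rightarrow> 'a \<Rightarrow> real" and alt :: "nat set" and k :: nat and \<alpha> c C d \<gamma> :: real
  defines "p i \<equiv> measure (distr M borel (Z i)) {x. c < \<bar>x\<bar>}"
    and "b i \<equiv> sign_bias (distr M borel (Z i)) c"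
  assumes indep: "indep_vars (\<lambda>_. borel) Z {1..}" and k: "1 \<le> k" and alt: "alt \<subseteq> {1..k}"
    and b: "\<And>i. i \<in> {1..k} \<Longrightarrow> 0 \<le> b i" and d: "0 \<le> d" "\<And>i. i \<in> alt \<Longrightarrow> d \<le> b i"
    and C: "0 < C" "exp (- C\<^sup>2 / 2) \<le> \<gamma>" and \<alpha>: "0 \<le> Ccrit k \<alpha>"
    and cond: "(Ccrit k \<alpha> + C) * sqrt ((\<Sum>i\<in>{1..k}. p i) + C * sqrt k / 2)
      \<le> d * ((\<Sum>i\<in>alt. p i) - C * sqrt (card alt) / 2)"
  shows "1 - 3 * \<gamma> \<le> prob {\<omega>\<in>space M. rejects \<alpha> c (\<lambda>i. Z i \<omega>)}"
proof -
  have "0 \<le> (\<Sum>i\<in>{1..k}. p i)" "0 < C * sqrt k / 2"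
    using C k by (auto simp: p_def sum_nonneg)
  then have "0 < (Ccrit k \<alpha> + C) * sqrt ((\<Sum>i\<in>{1..k}. p i) + C * sqrt k / 2)"
    using \<alpha> C by simp
  with cond have "alt \<noteq> {}"
    by auto
  have "1 - 3 * \<gamma> \<le> prob {\<omega>\<in>space M. typical c C k alt p b (\<lambda>i. Z i \<omega>)}"
    unfolding p_def b_def
    using C alt \<open>alt \<noteq> {}\<close> k by (intro prob_typical_ge indep_vars_subset[OF indep]) auto
  also have "\<dots> \<le> prob {\<omega>\<in>space M. rejects \<alpha> c (\<lambda>i. Z i \<omega>)}"
  proof (rule finite_measure_mono)
    show "{\<omega>\<in>space M. rejects \<alpha> c (\<lambda>i. Z i \<omega>)} \<in> events"
      using indep by (intro sets_Collect_rejects) (auto simp: indep_vars_def)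
    show "{\<omega>\<in>space M. typical c C k alt p b (\<lambda>i. Z i \<omega>)} \<subseteq> {\<omega>\<in>space M. rejects \<alpha> c (\<lambda>i. Z i \<omega>)}"
      using \<alpha> C by (auto intro: rejects_if_typical[OF alt b d _ cond])
  qed
  finally show ?thesis .
qed

section \<open>The Gaussian test\<close>

lemma N1_eq_card:
  assumes "\<And>i. r i \<in> {0, 1}"
  shows "N1 r k = card {i\<in>{1..k}. r i = 1}"
proof -
  have "N1 r k = (\<Sum>i\<in>{1..k}. if r i = 1 then 1 else 0)"
    unfolding N1_def using assms by (intro sum.cong refl) (metis insertE of_nat_0 of_nat_1 singletonD)
  then show ?thesis
    by (simp add: sum.If_cases Int_def)
qed

lemma sum_binary_eq:
  fixes f :: "nat \<Rightarrow> real"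
  assumes "\<And>i. r i \<in> {0, 1}"
  shows "(\<Sum>i\<in>{1..k}. f (r i)) = N1 r k * f 1 + N0 r k * f 0"
proof -
  have "f (r i) = real (r i) * f 1 + (1 - real (r i)) * f 0" for i
    using assms[of i] by auto
  then show ?thesis
    by (simp add: N1_def N0_def sum.distrib sum_distrib_right)
qed

lemma power_condition_rescale:
  fixes P P0 :: real
  assumes "0 < P" "0 < P0"
  shows "A / sqrt P * sqrt (n1 + n0 / (P / P0) + y / (2 * P)) \<le> d * (n1 - x / (2 * P))
    \<longleftrightarrow> A * sqrt (n1 * P + n0 * P0 + y / 2) \<le> d * (n1 * P - x / 2)"
proof -
  have "P * (A / sqrt P * sqrt (n1 + n0 / (P / P0) + y / (2 * P)))
      = A * (P / sqrt P) * sqrt (n1 + n0 / (P / P0) + y / (2 * P))"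
    by simp
  also have "\<dots> = A * sqrt (P * (n1 + n0 / (P / P0) + y / (2 * P)))"
    using assms by (simp add: real_div_sqrt real_sqrt_mult)
  also have "P * (n1 + n0 / (P / P0) + y / (2 * P)) = n1 * P + n0 * P0 + y / 2"
    using assms by (simp add: field_simps)
  finally have "P * (A / sqrt P * sqrt (n1 + n0 / (P / P0) + y / (2 * P)))
      = A * sqrt (n1 * P + n0 * P0 + y / 2)" .
  moreover have "P * (d * (n1 - x / (2 * P))) = d * (n1 * P - x / 2)"
    using assms by (simp add: field_simps)
  ultimately show ?thesis
    using mult_le_cancel_left_pos[OF assms(1)] by metis
qed

theorem theorem9:
  fixes M :: "'a measure" and Z :: "nat \<Rightarrow> 'a \<Rightarrow> real" and r :: "nat \<Rightarrow> nat"
    and \<mu> \<alpha> \<beta> c :: real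
  assumes "prob_space M"
    and "prob_space.indep_vars M (\<lambda>_. borel) Z {1..}"
    and "\<And>i. i \<ge> 1 \<Longrightarrow> distributed M lborel (Z i) (normal_density (\<mu> * real (r i)) 1)"
    and "\<And>i. r i \<in> {0, 1}"
    and "\<mu> > 0"
    and "0 < \<alpha>" "\<alpha> < 1" "0 < \<beta>" "\<beta> < 1"
    and "\<exists>k::nat. k \<ge> 1 \<and>
      (2 * Sfun \<mu> c - 1) * (N1 r k - Ccrit k (\<beta>/3) * sqrt (N1 r k) / (2 * Pabs \<mu> c))
      \<ge> (Ccrit k \<alpha> + Ccrit k (\<beta>/3)) / sqrt (Pabs \<mu> c) *
        sqrt (N1 r k + N0 r k / Dfun \<mu> c + Ccrit k (\<beta>/3) * sqrt (real k) / (2 * Pabs \<mu> c))"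
  shows "measure M {\<omega> \<in> space M. rejects \<alpha> c (\<lambda>i. Z i \<omega>)} \<ge> 1 - \<beta>"
proof -
  interpret prob_space M by fact
  obtain k :: nat where k: "1 \<le> k" and cond:
      "(Ccrit k \<alpha> + Ccrit k (\<beta>/3)) / sqrt (Pabs \<mu> c) *
        sqrt (N1 r k + N0 r k / (Pabs \<mu> c / Pabs 0 c) + Ccrit k (\<beta>/3) * sqrt (real k) / (2 * Pabs \<mu> c))
      \<le> (2 * Sfun \<mu> c - 1) * (N1 r k - Ccrit k (\<beta>/3) * sqrt (N1 r k) / (2 * Pabs \<mu> c))"
    using assms(10) by (auto simp: Dfun_def)
  define alt where "alt = {i\<in>{1..k}. r i = 1}"
  have law: "distr M borel (Z i) = Nlaw (\<mu> * real (r i))" if "1 \<le> i" for i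
    using assms(3)[OF that] by (rule distr_eq_Nlaw)
  have drift_nonneg: "0 \<le> 2 * Sfun (\<mu> * real n) c - 1" for n
    using Sfun_ge_half[of "\<mu> * real n" c] assms(5) by simp
  have C: "0 < Ccrit k (\<beta>/3)" "exp (- (Ccrit k (\<beta>/3))\<^sup>2 / 2) \<le> \<beta>/3" "0 < Ccrit k \<alpha>"
    using assms(6-9) by (intro Ccrit_pos exp_neg_Ccrit_le k; simp)+
  have "(\<Sum>i\<in>{1..k}. measure (distr M borel (Z i)) {x. c < \<bar>x\<bar>}) = N1 r k * Pabs \<mu> c + N0 r k * Pabs 0 c"
    using sum_binary_eq[OF assms(4), where f="\<lambda>n. Pabs (\<mu> * real n) c" and k=k] by (simp add: law Pabs_def)
  moreover have "card alt = N1 r k"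
    by (simp add: alt_def N1_eq_card[OF assms(4)])
  moreover have "(\<Sum>i\<in>alt. measure (distr M borel (Z i)) {x. c < \<bar>x\<bar>}) = N1 r k * Pabs \<mu> c"
    by (simp add: alt_def law Pabs_def \<open>card alt = N1 r k\<close>[symmetric])
  moreover note power_condition_rescale[OF Pabs_pos Pabs_pos, THEN iffD1, OF cond]
  ultimately have "1 - 3 * (\<beta>/3) \<le> prob {\<omega>\<in>space M. rejects \<alpha> c (\<lambda>i. Z i \<omega>)}"
    using drift_nonneg[of 1] drift_nonneg C
    by (intro prob_rejects_ge[OF assms(2) k, where alt=alt and d="2 * Sfun \<mu> c - 1"]) (auto simp: alt_def law sign_bias_Nlaw)
  then show ?thesis
    by simp
qed

end
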